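(* Let $m\ge1$ and let $W$ be a B-DMC. For $n\ge1$ let $E[J_n]=\frac{1}{N(n)}\sum_{\mathbf s\in\mathcal S_n}J(W_{\mathbf s})$, and for $n\le0$ let $E[J_n]=J(W)$. Then for every $n\ge1$, with $\mu=N(n-1)/N(n)$ (so $1-\mu=N(n-m)/N(n)$), $$E[J_n]\ \ge\ \mu\,E[J_{n-1}]+(1-\mu)\,E[J_{n-m}],$$ and equality holds only if, for every $\mathbf s=(s_1,\dots,s_n)\in\mathcal S_n$ with $s_n\in\{+,-\}$, one has $J(W_{(s_1,\dots,s_{n-1})})\in\{0,1\}$ or $J(W_{(s_1,\dots,s_{n-m})})\in\{0,1\}$ (where $(s_1,\dots,s_{n-m})$ is the empty string if $n\le m$).
   Context: Fix an integer $m\ge1$. Define integers $N(n)$ by $N(n)=1$ for $1-m\le n\le 0$ and $N(n)=N(n-1)+N(n-m)$ for $n\ge1$; write $\mathbb N_n=\{1,\dots,N(n)\}$ (so $\mathbb N_n=\{1\}$ for $n\le 0$, and $\mathbb N_{n-m}\subseteq\mathbb N_{n-1}$). Define vectors $\mathbf s_n^{(i)}\in\{+,-,\bigstar\}^n$ for $n\ge0$, $i\in\mathbb N_n$, recursively: $\mathbf s_0^{(1)}$ is the empty vector, and for $n\ge1$: $\mathbf s_n^{(j)}=(\mathbf s_{n-1}^{(j)},+)$ and $\mathbf s_n^{(j+N(n-1))}=(\mathbf s_{n-1}^{(j)},-)$ for $j\in\mathbb N_{n-m}$, while $\mathbf s_n^{(j)}=(\mathbf s_{n-1}^{(j)},\bigstar)$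 for $j\in\mathbb N_{n-1}\setminus\mathbb N_{n-m}$. Let $\mathcal S_n=\{\mathbf s_n^{(i)}:i\in\mathbb N_n\}$ for $n\ge1$. A B-DMC $V$ is a channel with input alphabet $\{0,1\}$, a finite output alphabet $\mathcal Y$ and transition probabilities $V(y|x)$. With base-2 logarithms and uniform input: $I(V)=\sum_{y}\sum_{x}\frac12V(y|x)\log\frac{V(y|x)}{\frac12V(y|0)+\frac12V(y|1)}$, $Z(V)=\sum_y\sqrt{V(y|0)V(y|1)}$, $J(V)=\log\frac{2}{1+Z(V)}$. For B-DMCs $V':\{0,1\}\to\mathcal Y_1$ and $V'':\{0,1\}\to\mathcal Y_2$ define $V'\boxminus V'':\{0,1\}\to\mathcal Y_1\times\mathcal Y_2$ by $(V'\boxminus V'')(y_1,y_2|x_1)=\sum_{x_2\in\{0,1\}}\frac12V'(y_1|x_1\oplus x_2)V''(y_2|x_2)$, and $V'\boxplus V'':\{0,1\}\to\mathcal Y_1\times\mathcal Y_2\times\{0,1\}$ by $(V'\boxplus V'')(y_1,y_2,x_1|x_2)=\frac12V'(y_1|x_1\oplus x_2)V''(y_2|x_2)$. Fix a B-DMC $W$. For every finite string $\mathbf t=(t_1,\dots,t_n)\in\{+,-,\bigstar\}^n$, $n\ge0$, define a B-DMC $W_{\mathbf t}$ recursively: $W_{\emptyset}=W$ for the empty string; for $n\ge1$ let $\mathbf t'=(t_1,\dots,t_{n-1})$ and $\mathbf t''=(t_1,\dots,t_{n-m})$ (the empty string if $n\le m$); then $W_{\mathbf t}=W_{\mathbf t''}\boxplus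 W_{\mathbf t'}$ if $t_n=+$, $W_{\mathbf t}=W_{\mathbf t''}\boxminus W_{\mathbf t'}$ if $t_n=-$, and $W_{\mathbf t}=W_{\mathbf t'}$ if $t_n=\bigstar$. *)

theory Defs
  imports Complex_Main
begin

text \<open>Nnat m k = N(k) for k >= 0 (N(0)=1; N(n)=1 for n <= 0).  The guard m = 0 only
  serves termination; the theorem assumes m >= 1.\<close>
fun Nnat :: "nat \<Rightarrow> nat \<Rightarrow> nat" where
  "Nnat m 0 = 1"
| "Nnat m (Suc k) = Nnat m k + (if Suc k \<le> m \<or> m = 0 then 1 else Nnat m (Suc k - m))"

definition NN :: "nat \<Rightarrow> int \<Rightarrow> nat" where
  "NN m n = (if n \<le> 0 then 1 else Nnat m (nat n))"

datatype sym = Plus | Minus | Star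

text \<open>svec m n i = s_n^(i), as a list of length n.\<close>
fun svec :: "nat \<Rightarrow> nat \<Rightarrow> nat \<Rightarrow> sym list" where
  "svec m 0 i = []"
| "svec m (Suc k) i =
     (if i \<le> NN m (int k) then
        (if i \<le> NN m (int (Suc k) - int m) then svec m k i @ [Plus] else svec m k i @ [Star])
      else svec m k (i - NN m (int k)) @ [Minus])"

definition Sset :: "nat \<Rightarrow> nat \<Rightarrow> sym list set" where
  "Sset m n = {svec m n i | i. i \<in> {1..NN m (int n)}}"

text \<open>Outputs of synthesized channels: base outputs, pairs (y1,y2), triples (y1,y2,x1).
  Input 0 = False, 1 = True, xor = inequality.\<close>
datatype 'y outp = Leaf 'y | Pr "'y outp" "'y outp" | PrB "'y outp" "'y outp" bool

type_synonym 'y chan = "'y outp set \<times> ('y outp \<Rightarrow> bool \<Rightarrow> real)"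

definition base_chan :: "'y set \<Rightarrow> ('y \<Rightarrow> bool \<Rightarrow> real) \<Rightarrow> 'y chan" where
  "base_chan Y W = (Leaf ` Y, \<lambda>ou x. case ou of Leaf y \<Rightarrow> W y x | _ \<Rightarrow> 0)"

definition boxminus :: "'y chan \<Rightarrow> 'y chan \<Rightarrow> 'y chan" where
  "boxminus V1 V2 =
     ((\<lambda>(a, b). Pr a b) ` (fst V1 \<times> fst V2),
      \<lambda>ou x1. case ou of
          Pr a b \<Rightarrow> (\<Sum>x2\<in>(UNIV::bool set). (1/2) * snd V1 a (x1 \<noteq> x2) * snd V2 b x2)
        | _ \<Rightarrow> 0)"

definition boxplus :: "'y chan \<Rightarrow> 'y chan \<Rightarrow> 'y chan" where
  "boxplus V1 V2 =
     ((\<lambda>(a, b, x1). PrB a b x1) ` (fst V1 \<times> fst V2 \<times> (UNIV::bool set)),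
      \<lambda>ou x2. case ou of
          PrB a b x1 \<Rightarrow> (1/2) * snd V1 a (x1 \<noteq> x2) * snd V2 b x2
        | _ \<Rightarrow> 0)"

definition Bhat :: "'y chan \<Rightarrow> real" where
  "Bhat V = (\<Sum>y\<in>fst V. sqrt (snd V y False * snd V y True))"

definition Jc :: "'y chan \<Rightarrow> real" where
  "Jc V = log 2 (2 / (1 + Bhat V))"

text \<open>W_t.  t' = butlast t, t'' = take (length t - m) t (max 1 m only for termination).\<close>
function chanW :: "nat \<Rightarrow> 'y chan \<Rightarrow> sym list \<Rightarrow> 'y chan" where
  "chanW m W t =
     (if t = [] then W
      else (let t1 = butlast t; t2 = take (length t - max 1 m) t in
            case last t of
              Plus \<Rightarrow> boxplus (chanW m W t2) (chanW m W t1)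
            | Minus \<Rightarrow> boxminus (chanW m W t2) (chanW m W t1)
            | Star \<Rightarrow> chanW m W t1))"
  by pat_completeness auto
termination
  by (relation "measure (\<lambda>(m, W, t). length t)") auto

definition EJ :: "nat \<Rightarrow> 'y chan \<Rightarrow> int \<Rightarrow> real" where
  "EJ m W n = (if n \<le> 0 then Jc W
     else (1 / real (NN m n)) * (\<Sum>s\<in>Sset m (nat n). Jc (chanW m W s)))"

definition is_bdmc :: "'y set \<Rightarrow> ('y \<Rightarrow> bool \<Rightarrow> real) \<Rightarrow> bool" where
  "is_bdmc Y W \<longleftrightarrow> finite Y \<and> (\<forall>y\<in>Y. \<forall>x. W y x \<ge> 0) \<and> (\<forall>x. (\<Sum>y\<in>Y. W y x) = 1)"

end

theory Submission
  imports Defs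
begin

text \<open>The Bhattacharyya parameters of the two combinations satisfy \<open>Z(A \<boxplus> B) = Z(A) Z(B)\<close>
  and \<open>Z(A \<boxminus> B) \<le> Z(A) + Z(B) - Z(A) Z(B)\<close>.  As \<open>J = 1 - log (1 + Z)\<close> and
  \<open>(1 + xy)(1 + x + y - xy) = (1 + x)(1 + y) - xy(1 - x)(1 - y)\<close>, this gives
  \<open>J(A \<boxplus> B) + J(A \<boxminus> B) \<ge> J(A) + J(B)\<close>, with equality only if \<open>Z(A)\<close> or \<open>Z(B)\<close>
  lies in \<open>{0, 1}\<close>.  The vectors of \<open>S\<^sub>n\<close> ending in \<open>\<bigstar>\<close> extend the last
  \<open>N(n-1) - N(n-m)\<close> vectors of \<open>S\<^sub>n\<^sub>-\<^sub>1\<close>, while those ending in \<open>+\<close> and \<open>-\<close> extend the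
  first \<open>N(n-m)\<close> vectors in pairs, and the prefixes of length \<open>n - m\<close> of these run through
  \<open>S\<^sub>n\<^sub>-\<^sub>m\<close>.  Hence \<open>N(n) E[J\<^sub>n] - N(n-1) E[J\<^sub>n\<^sub>-\<^sub>1] - N(n-m) E[J\<^sub>n\<^sub>-\<^sub>m]\<close> is the sum of
  the nonnegative gains of these pairs.\<close>

abbreviation is_chan :: "'y chan \<Rightarrow> bool" where
  "is_chan V \<equiv> is_bdmc (fst V) (snd V)"

lemma sum_boxplus:
  "(\<Sum>ou\<in>fst (boxplus A B). g ou) = (\<Sum>a\<in>fst A. \<Sum>b\<in>fst B. \<Sum>x1\<in>UNIV. g (PrB a b x1))"
proof -
  have "inj_on (\<lambda>(a, b, x1). PrB a b x1) (fst A \<times> fst B \<times> (UNIV::bool set))"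
    by (auto simp: inj_on_def)
  then show ?thesis
    unfolding boxplus_def by (simp add: sum.reindex sum.cartesian_product split_def)
qed

lemma sum_boxminus:
  "(\<Sum>ou\<in>fst (boxminus A B). g ou) = (\<Sum>a\<in>fst A. \<Sum>b\<in>fst B. g (Pr a b))"
proof -
  have "inj_on (\<lambda>(a, b). Pr a b) (fst A \<times> fst B)"
    by (auto simp: inj_on_def)
  then show ?thesis
    unfolding boxminus_def by (simp add: sum.reindex sum.cartesian_product split_def)
qed

lemma snd_boxplus [simp]:
  "snd (boxplus A B) (PrB a b x1) x2 = 1/2 * snd A a (x1 \<noteq> x2) * snd B b x2"
  by (simp add: boxplus_def)

lemma snd_boxminus [simp]:
  "snd (boxminus A B) (Pr a b) x1 = (\<Sum>x2\<in>UNIV. 1/2 * snd A a (x1 \<noteq> x2) * snd B b x2)"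
  by (simp add: boxminus_def)

lemma is_chan_base_chan: "is_bdmc Y W \<Longrightarrow> is_chan (base_chan Y W)"
proof -
  have "inj_on Leaf Y" by (simp add: inj_on_def)
  then show "is_bdmc Y W \<Longrightarrow> ?thesis"
    unfolding is_bdmc_def base_chan_def by (auto simp: sum.reindex)
qed

lemma is_chan_boxplus:
  assumes "is_chan A" "is_chan B"
  shows "is_chan (boxplus A B)"
proof -
  have "\<And>x. (\<Sum>a\<in>fst A. snd A a x) = 1" "\<And>x. (\<Sum>b\<in>fst B. snd B b x) = 1"
    using assms by (auto simp: is_bdmc_def)
  then have "(\<Sum>y\<in>fst (boxplus A B). snd (boxplus A B) y x) = 1" for x
    unfolding sum_boxplus
    by (cases x) (simp_all add: UNIV_bool sum.distrib sum_distrib_left[symmetric] sum_divide_distrib[symmetric])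
  with assms show ?thesis
    by (auto simp: is_bdmc_def boxplus_def)
qed

lemma is_chan_boxminus:
  assumes "is_chan A" "is_chan B"
  shows "is_chan (boxminus A B)"
proof -
  have "\<And>x. (\<Sum>a\<in>fst A. snd A a x) = 1" "\<And>x. (\<Sum>b\<in>fst B. snd B b x) = 1"
    using assms by (auto simp: is_bdmc_def)
  then have "(\<Sum>y\<in>fst (boxminus A B). snd (boxminus A B) y x) = 1" for x
    unfolding sum_boxminus
    by (cases x) (simp_all add: UNIV_bool sum.distrib sum_distrib_left[symmetric] sum_divide_distrib[symmetric])
  with assms show ?thesis
    by (auto simp: is_bdmc_def boxminus_def intro!: sum_nonneg)
qed

subsection \<open>Bhattacharyya parameter\<close>

lemma Bhat_nonneg: "is_chan A \<Longrightarrow> 0 \<le> Bhat A"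
  unfolding Bhat_def is_bdmc_def by (auto intro!: sum_nonneg)

lemma Bhat_le_1:
  assumes "is_chan A"
  shows "Bhat A \<le> 1"
proof -
  have "Bhat A \<le> (\<Sum>y\<in>fst A. (snd A y False + snd A y True) / 2)"
    unfolding Bhat_def using assms by (intro sum_mono) (metis is_bdmc_def arith_geo_mean_sqrt)
  also have "\<dots> = 1"
    using assms by (simp add: is_bdmc_def sum_divide_distrib[symmetric] sum.distrib)
  finally show ?thesis .
qed

lemma Bhat_boxplus: "Bhat (boxplus A B) = Bhat A * Bhat B"
proof -
  have term_eq: "sqrt (snd (boxplus A B) (PrB a b x1) False * snd (boxplus A B) (PrB a b x1) True)
      = 1/2 * (sqrt (snd A a False * snd A a True) * sqrt (snd B b False * snd B b True))" for a b x1
  proof -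
    have product: "snd (boxplus A B) (PrB a b x1) False * snd (boxplus A B) (PrB a b x1) True
        = (1/2)\<^sup>2 * ((snd A a False * snd A a True) * (snd B b False * snd B b True))"
      by (cases x1) (simp_all add: power2_eq_square mult_ac)
    show ?thesis
      by (subst product) (simp add: real_sqrt_mult)
  qed
  show ?thesis
    unfolding Bhat_def sum_boxplus term_eq by (simp add: sum_product)
qed

text \<open>The pointwise form of \<open>Z(A \<boxminus> B) \<le> Z(A) + Z(B) - Z(A) Z(B)\<close>, where
  \<open>a\<^sup>2, d\<^sup>2\<close> are the two transition probabilities of an output of \<open>A\<close> and \<open>b\<^sup>2, c\<^sup>2\<close> those of \<open>B\<close>.\<close>
lemma sqrt_boxminus_term_le:
  fixes a b c d :: real
  assumes "0 \<le> a" "0 \<le> b" "0 \<le> c" "0 \<le> d"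
  shows "sqrt ((a\<^sup>2 * b\<^sup>2 + d\<^sup>2 * c\<^sup>2) * (d\<^sup>2 * b\<^sup>2 + a\<^sup>2 * c\<^sup>2))
    \<le> a * d * (b\<^sup>2 + c\<^sup>2) + b * c * (a\<^sup>2 + d\<^sup>2) - 2 * a * b * c * d"
proof -
  let ?R = "a * d * (b\<^sup>2 + c\<^sup>2) + b * c * (a\<^sup>2 + d\<^sup>2) - 2 * a * b * c * d"
  have R_eq: "?R = a * d * (b - c)\<^sup>2 + b * c * (a\<^sup>2 + d\<^sup>2)"
    by (simp add: algebra_simps power2_eq_square)
  have R_nonneg: "0 \<le> ?R"
    unfolding R_eq using assms by (intro add_nonneg_nonneg mult_nonneg_nonneg) auto
  have "?R\<^sup>2 - (a\<^sup>2 * b\<^sup>2 + d\<^sup>2 * c\<^sup>2) * (d\<^sup>2 * b\<^sup>2 + a\<^sup>2 * c\<^sup>2) = 2 * a * b * c * d * (a - d)\<^sup>2 * (b - c)\<^sup>2"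
    by (simp add: algebra_simps power2_eq_square)
  moreover have "0 \<le> 2 * a * b * c * d * (a - d)\<^sup>2 * (b - c)\<^sup>2"
    using assms by simp
  ultimately have "sqrt ((a\<^sup>2 * b\<^sup>2 + d\<^sup>2 * c\<^sup>2) * (d\<^sup>2 * b\<^sup>2 + a\<^sup>2 * c\<^sup>2)) \<le> sqrt (?R\<^sup>2)"
    by (intro real_sqrt_le_mono) linarith
  with R_nonneg show ?thesis
    by simp
qed

lemma Bhat_boxminus_le:
  assumes A: "is_chan A" and B: "is_chan B"
  shows "Bhat (boxminus A B) \<le> Bhat A + Bhat B - Bhat A * Bhat B"
proof -
  let ?zA = "\<lambda>a. sqrt (snd A a False * snd A a True)"
  let ?zB = "\<lambda>b. sqrt (snd B b False * snd B b True)"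
  have "Bhat (boxminus A B)
      = (\<Sum>a\<in>fst A. \<Sum>b\<in>fst B. sqrt (snd (boxminus A B) (Pr a b) False * snd (boxminus A B) (Pr a b) True))"
    unfolding Bhat_def sum_boxminus ..
  also have "\<dots> \<le> (\<Sum>a\<in>fst A. \<Sum>b\<in>fst B. ?zA a * ((snd B b False + snd B b True) / 2)
      + (snd A a False + snd A a True) / 2 * ?zB b - ?zA a * ?zB b)"
  proof (intro sum_mono)
    fix a b assume "a \<in> fst A" "b \<in> fst B"
    then have "0 \<le> snd A a x" "0 \<le> snd B b x" for x
      using A B by (auto simp: is_bdmc_def)
    then obtain \<alpha> \<delta> \<beta> \<gamma> where
      nonneg: "0 \<le> \<alpha>" "0 \<le> \<delta>" "0 \<le> \<beta>" "0 \<le> \<gamma>" and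
      sq: "snd A a False = \<alpha>\<^sup>2" "snd A a True = \<delta>\<^sup>2" "snd B b False = \<beta>\<^sup>2" "snd B b True = \<gamma>\<^sup>2"
      by (metis real_sqrt_ge_zero real_sqrt_pow2)
    have "sqrt (snd (boxminus A B) (Pr a b) False * snd (boxminus A B) (Pr a b) True)
        = 1/2 * sqrt ((\<alpha>\<^sup>2 * \<beta>\<^sup>2 + \<delta>\<^sup>2 * \<gamma>\<^sup>2) * (\<delta>\<^sup>2 * \<beta>\<^sup>2 + \<alpha>\<^sup>2 * \<gamma>\<^sup>2))"
    proof -
      have product: "snd (boxminus A B) (Pr a b) False * snd (boxminus A B) (Pr a b) True
          = (1/2)\<^sup>2 * ((\<alpha>\<^sup>2 * \<beta>\<^sup>2 + \<delta>\<^sup>2 * \<gamma>\<^sup>2) * (\<delta>\<^sup>2 * \<beta>\<^sup>2 + \<alpha>\<^sup>2 * \<gamma>\<^sup>2))"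
        by (simp add: UNIV_bool sq algebra_simps power2_eq_square)
      show ?thesis
        by (subst product) (simp add: real_sqrt_mult)
    qed
    also have "\<dots> \<le> 1/2 * (\<alpha> * \<delta> * (\<beta>\<^sup>2 + \<gamma>\<^sup>2) + \<beta> * \<gamma> * (\<alpha>\<^sup>2 + \<delta>\<^sup>2) - 2 * \<alpha> * \<beta> * \<gamma> * \<delta>)"
      using sqrt_boxminus_term_le[OF nonneg(1,3,4,2)] by simp
    also have "\<dots> = ?zA a * ((snd B b False + snd B b True) / 2)
        + (snd A a False + snd A a True) / 2 * ?zB b - ?zA a * ?zB b"
      using nonneg by (simp add: sq real_sqrt_mult field_simps)
    finally show "sqrt (snd (boxminus A B) (Pr a b) False * snd (boxminus A B) (Pr a b) True) \<le> \<dots>" .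
  qed
  also have "\<dots> = Bhat A * (\<Sum>b\<in>fst B. (snd B b False + snd B b True) / 2)
      + (\<Sum>a\<in>fst A. (snd A a False + snd A a True) / 2) * Bhat B - Bhat A * Bhat B"
    unfolding Bhat_def by (simp add: sum_product sum.distrib sum_subtractf)
  also have "\<dots> = Bhat A + Bhat B - Bhat A * Bhat B"
    using A B by (simp add: is_bdmc_def sum.distrib sum_divide_distrib[symmetric])
  finally show ?thesis .
qed

subsection \<open>Conservation inequality for \<open>J\<close>\<close>

lemma log_sum_ge_and_eq_extremal:
  fixes x y z :: real
  assumes x: "0 \<le> x" "x \<le> 1" and y: "0 \<le> y" "y \<le> 1" and z: "0 \<le> z" "z \<le> x + y - x * y"
  shows "log 2 (2 / (1 + x)) + log 2 (2 / (1 + y)) \<le> log 2 (2 / (1 + x * y)) + log 2 (2 / (1 + z))"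
    and "log 2 (2 / (1 + x)) + log 2 (2 / (1 + y)) = log 2 (2 / (1 + x * y)) + log 2 (2 / (1 + z))
      \<Longrightarrow> x \<in> {0, 1} \<or> y \<in> {0, 1}"
proof -
  have J_eq: "log 2 (2 / (1 + t)) = 1 - log 2 (1 + t)" if "0 \<le> t" for t :: real
    using that by (simp add: log_divide_pos)
  have xy: "0 \<le> x * y"
    using x y by simp
  have lhs: "log 2 (2 / (1 + x)) + log 2 (2 / (1 + y)) = 2 - log 2 ((1 + x) * (1 + y))"
    using x y by (simp add: J_eq log_mult_pos)
  have rhs: "log 2 (2 / (1 + x * y)) + log 2 (2 / (1 + z)) = 2 - log 2 ((1 + x * y) * (1 + z))"
    using xy z by (simp add: J_eq log_mult_pos)
  have "(1 + x * y) * (1 + z) \<le> (1 + x * y) * (1 + (x + y - x * y))"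
    using z xy by (intro mult_left_mono) auto
  also have "\<dots> = (1 + x) * (1 + y) - x * y * (1 - x) * (1 - y)"
    by (simp add: algebra_simps)
  finally have gap: "(1 + x * y) * (1 + z) \<le> (1 + x) * (1 + y) - x * y * (1 - x) * (1 - y)" .
  have gap_nonneg: "0 \<le> x * y * (1 - x) * (1 - y)"
    using x y by simp
  have pos: "0 < (1 + x * y) * (1 + z)"
    using xy z by (simp add: add_pos_nonneg)
  show "log 2 (2 / (1 + x)) + log 2 (2 / (1 + y)) \<le> log 2 (2 / (1 + x * y)) + log 2 (2 / (1 + z))"
    unfolding lhs rhs using gap gap_nonneg pos by simp
  assume "log 2 (2 / (1 + x)) + log 2 (2 / (1 + y)) = log 2 (2 / (1 + x * y)) + log 2 (2 / (1 + z))"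
  then have "\<not> (1 + x * y) * (1 + z) < (1 + x) * (1 + y)"
    unfolding lhs rhs using log_less[of 2 "(1 + x * y) * (1 + z)" "(1 + x) * (1 + y)"] pos by auto
  then have "x * y * (1 - x) * (1 - y) = 0"
    using gap gap_nonneg by linarith
  then show "x \<in> {0, 1} \<or> y \<in> {0, 1}"
    by auto
qed

lemma Jc_boxplus_boxminus:
  assumes A: "is_chan A" and B: "is_chan B"
  shows "Jc A + Jc B \<le> Jc (boxplus A B) + Jc (boxminus A B)"
    and "Jc A + Jc B = Jc (boxplus A B) + Jc (boxminus A B) \<Longrightarrow> Jc A \<in> {0, 1} \<or> Jc B \<in> {0, 1}"
proof -
  note J = log_sum_ge_and_eq_extremal[OF Bhat_nonneg[OF A] Bhat_le_1[OF A]
      Bhat_nonneg[OF B] Bhat_le_1[OF B]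
      Bhat_nonneg[OF is_chan_boxminus[OF A B]] Bhat_boxminus_le[OF A B]]
  show "Jc A + Jc B \<le> Jc (boxplus A B) + Jc (boxminus A B)"
    using J(1) unfolding Jc_def Bhat_boxplus .
  assume "Jc A + Jc B = Jc (boxplus A B) + Jc (boxminus A B)"
  then have "Bhat A \<in> {0, 1} \<or> Bhat B \<in> {0, 1}"
    using J(2) unfolding Jc_def Bhat_boxplus by blast
  then show "Jc A \<in> {0, 1} \<or> Jc B \<in> {0, 1}"
    by (auto simp: Jc_def)
qed

declare chanW.simps [simp del]

lemma chanW_Nil [simp]: "chanW m W [] = W"
  by (subst chanW.simps) simp

lemma chanW_snoc:
  assumes "1 \<le> m"
  shows "chanW m W (t @ [x]) = (case x of
       Plus \<Rightarrow> boxplus (chanW m W (take (Suc (length t) - m) t)) (chanW m W t)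
     | Minus \<Rightarrow> boxminus (chanW m W (take (Suc (length t) - m) t)) (chanW m W t)
     | Star \<Rightarrow> chanW m W t)"
proof -
  have "max 1 m = m" "Suc 0 - m = 0"
    using assms by auto
  then show ?thesis
    by (subst chanW.simps) (simp add: Let_def take_append)
qed

lemma is_chan_chanW:
  assumes "is_chan W"
  shows "is_chan (chanW m W t)"
proof (induction t rule: measure_induct_rule[where f = length])
  case (less t)
  show ?case
  proof (cases "t = []")
    case True
    then show ?thesis using assms by simp
  next
    case False
    then have "is_chan (chanW m W (butlast t))" "is_chan (chanW m W (take (length t - max 1 m) t))"
      by (simp_all add: less)
    with False show ?thesis
      by (subst (1 2) chanW.simps) (simp add: Let_def is_chan_boxplus is_chan_boxminus split: sym.split)
  qed
qed

subsection \<open>Counting and sign vectors\<close>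

lemma Nnat_pos: "1 \<le> Nnat m k"
  by (induction k) auto

lemma Nnat_Suc: "1 \<le> m \<Longrightarrow> Nnat m (Suc k) = Nnat m k + Nnat m (Suc k - m)"
  by auto

lemma Nnat_mono: "a \<le> b \<Longrightarrow> Nnat m a \<le> Nnat m b"
  by (induction b) (auto simp: le_Suc_eq)

lemma Nnat_Suc_diff_le: "1 \<le> m \<Longrightarrow> Nnat m (Suc k - m) \<le> Nnat m k"
  by (rule Nnat_mono) auto

declare Nnat.simps(2) [simp del]

lemma NN_of_nat [simp]: "NN m (int k) = Nnat m k"
  by (simp add: NN_def)

lemma NN_diff: "NN m (int n - int m) = Nnat m (n - m)"
  by (cases "n \<le> m") (auto simp: NN_def nat_diff_distrib)

lemma length_svec [simp]: "length (svec m n i) = n"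
  by (induction n arbitrary: i) auto

lemma svec_Suc:
  "svec m (Suc k) i =
    (if i \<le> Nnat m k then
       (if i \<le> Nnat m (Suc k - m) then svec m k i @ [Plus] else svec m k i @ [Star])
     else svec m k (i - Nnat m k) @ [Minus])"
  using NN_diff[of m "Suc k"] by simp

declare svec.simps(2) [simp del]

lemma take_svec:
  assumes "i \<le> Nnat m k" "k \<le> n"
  shows "take k (svec m n i) = svec m k i"
  using assms(2)
proof (induction n)
  case (Suc n)
  show ?case
  proof (cases "k = Suc n")
    case False
    with Suc.prems have "k \<le> n" by simp
    moreover from this have "i \<le> Nnat m n"
      using assms(1) Nnat_mono order_trans by blast
    ultimately show ?thesis
      using Suc.IH by (simp add: svec_Suc)
  qed simp
qed simp

lemma inj_on_svec:
  assumes "1 \<le> m"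
  shows "inj_on (svec m n) {1..Nnat m n}"
proof (induction n)
  case (Suc k)
  define j where "j i = (if i \<le> Nnat m k then i else i - Nnat m k)" for i
  define x where "x i = (if i \<le> Nnat m k then (if i \<le> Nnat m (Suc k - m) then Plus else Star)
    else Minus)" for i
  have svec_eq: "svec m (Suc k) i = svec m k (j i) @ [x i]" for i
    by (simp add: svec_Suc j_def x_def)
  have j_range: "j i \<in> {1..Nnat m k}" if "i \<in> {1..Nnat m (Suc k)}" for i
    using that Nnat_Suc[OF assms, of k] Nnat_Suc_diff_le[OF assms, of k] by (auto simp: j_def)
  show ?case
  proof (rule inj_onI)
    fix i i' assume i: "i \<in> {1..Nnat m (Suc k)}" and i': "i' \<in> {1..Nnat m (Suc k)}"
      and "svec m (Suc k) i = svec m (Suc k) i'"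
    then have "svec m k (j i) = svec m k (j i')" and x: "x i = x i'"
      unfolding svec_eq by auto
    then have "j i = j i'"
      using Suc.IH j_range[OF i] j_range[OF i'] by (auto dest: inj_onD)
    moreover have "i \<le> Nnat m k \<longleftrightarrow> i' \<le> Nnat m k"
      using x by (auto simp: x_def split: if_splits)
    ultimately show "i = i'"
      by (auto simp: j_def split: if_splits)
  qed
qed simp

lemma Sset_eq_image: "Sset m n = svec m n ` {1..Nnat m n}"
  unfolding Sset_def by auto

lemma Sset_Suc_last_signed:
  assumes "1 \<le> m" "s \<in> Sset m (Suc k)" "last s \<noteq> Star"
  obtains i where "i \<in> {1..Nnat m (Suc k - m)}" "s = svec m k i @ [last s]"
proof -
  from assms(2) obtain i where i: "i \<in> {1..Nnat m k + Nnat m (Suc k - m)}" and s: "s = svec m (Suc k) i"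
    unfolding Sset_eq_image Nnat_Suc[OF assms(1)] by auto
  show ?thesis
  proof (cases "i \<le> Nnat m k")
    case True
    with assms(3) i show ?thesis
      using that[of i] by (auto simp: s svec_Suc split: if_splits)
  next
    case False
    with i have "i - Nnat m k \<in> {1..Nnat m (Suc k - m)}"
      by auto
    moreover from False have "s = svec m k (i - Nnat m k) @ [last s]"
      by (simp add: s svec_Suc)
    ultimately show ?thesis
      by (rule that)
  qed
qed

lemma sum_svec_Suc:
  fixes f :: "sym list \<Rightarrow> real"
  assumes "1 \<le> m"
  shows "(\<Sum>i\<in>{1..Nnat m (Suc k)}. f (svec m (Suc k) i))
    = (\<Sum>i\<in>{1..Nnat m (Suc k - m)}. f (svec m k i @ [Plus]) + f (svec m k i @ [Minus]))
      + (\<Sum>i\<in>{Nnat m (Suc k - m) + 1..Nnat m k}. f (svec m k i @ [Star]))"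
proof -
  let ?N = "Nnat m k" and ?M = "Nnat m (Suc k - m)"
  have MN: "?N = ?M + (?N - ?M)"
    using Nnat_Suc_diff_le[OF assms] by simp
  have "(\<Sum>i\<in>{1..Nnat m (Suc k)}. f (svec m (Suc k) i))
      = (\<Sum>i\<in>{1..?M}. f (svec m (Suc k) i)) + (\<Sum>i\<in>{?M + 1..?N}. f (svec m (Suc k) i))
        + (\<Sum>i\<in>{1..?M}. f (svec m (Suc k) (i + ?N)))"
    using sum.ub_add_nat[of 1 ?N "\<lambda>i. f (svec m (Suc k) i)" ?M]
      sum.ub_add_nat[of 1 ?M "\<lambda>i. f (svec m (Suc k) i)" "?N - ?M"]
      sum.shift_bounds_cl_nat_ivl[of "\<lambda>i. f (svec m (Suc k) i)" 1 ?N ?M]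
    by (simp add: Nnat_Suc[OF assms] add.commute flip: MN)
  also have "\<dots> = (\<Sum>i\<in>{1..?M}. f (svec m k i @ [Plus])) + (\<Sum>i\<in>{?M + 1..?N}. f (svec m k i @ [Star]))
      + (\<Sum>i\<in>{1..?M}. f (svec m k i @ [Minus]))"
    using MN by (intro arg_cong2[where f = "(+)"] sum.cong) (auto simp: svec_Suc)
  finally show ?thesis
    by (simp add: sum.distrib)
qed

subsection \<open>Averages of \<open>J\<close>\<close>

lemma sum_Jc_svec:
  assumes "1 \<le> m"
  shows "real (Nnat m k) * EJ m V (int k) = (\<Sum>i\<in>{1..Nnat m k}. Jc (chanW m V (svec m k i)))"
proof (cases "k = 0")
  case False
  have "(\<Sum>s\<in>Sset m k. Jc (chanW m V s)) = (\<Sum>i\<in>{1..Nnat m k}. Jc (chanW m V (svec m k i)))"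
    unfolding Sset_eq_image by (subst sum.reindex[OF inj_on_svec[OF assms]]) (simp add: comp_def)
  with False Nnat_pos[of m k] show ?thesis
    by (simp add: EJ_def)
qed (simp add: EJ_def)

definition pair_gain :: "nat \<Rightarrow> 'y chan \<Rightarrow> nat \<Rightarrow> nat \<Rightarrow> real" where
  "pair_gain m V k i =
     Jc (chanW m V (svec m k i @ [Plus])) + Jc (chanW m V (svec m k i @ [Minus]))
     - Jc (chanW m V (svec m k i)) - Jc (chanW m V (svec m (Suc k - m) i))"

lemma pair_gain_eq:
  fixes V :: "'y chan"
  assumes "1 \<le> m" "i \<le> Nnat m (Suc k - m)"
  defines "A \<equiv> chanW m V (svec m (Suc k - m) i)" and "B \<equiv> chanW m V (svec m k i)"
  shows "pair_gain m V k i = Jc (boxplus A B) + Jc (boxminus A B) - Jc B - Jc A"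
proof -
  have "take (Suc k - m) (svec m k i) = svec m (Suc k - m) i"
    using assms(1,2) by (intro take_svec) auto
  then show ?thesis
    unfolding pair_gain_def A_def B_def by (simp add: chanW_snoc[OF assms(1)])
qed

lemma EJ_Suc_eq_sum_pair_gain:
  assumes "1 \<le> m"
  shows "real (Nnat m (Suc k)) * EJ m V (int (Suc k))
    = real (Nnat m k) * EJ m V (int k) + real (Nnat m (Suc k - m)) * EJ m V (int (Suc k - m))
      + (\<Sum>i\<in>{1..Nnat m (Suc k - m)}. pair_gain m V k i)"
proof -
  let ?N = "Nnat m k" and ?M = "Nnat m (Suc k - m)" and ?J = "\<lambda>t. Jc (chanW m V t)"
  have "?N = ?M + (?N - ?M)"
    using Nnat_Suc_diff_le[OF assms] by simp
  then have "real ?N * EJ m V (int k)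
      = (\<Sum>i\<in>{1..?M}. ?J (svec m k i)) + (\<Sum>i\<in>{?M + 1..?N}. ?J (svec m k i @ [Star]))"
    using sum.ub_add_nat[of 1 ?M "\<lambda>i. ?J (svec m k i)" "?N - ?M"]
    by (simp add: sum_Jc_svec[OF assms] chanW_snoc[OF assms])
  moreover have "real (Nnat m (Suc k)) * EJ m V (int (Suc k))
      = (\<Sum>i\<in>{1..?M}. ?J (svec m k i @ [Plus]) + ?J (svec m k i @ [Minus]))
        + (\<Sum>i\<in>{?M + 1..?N}. ?J (svec m k i @ [Star]))"
    using sum_svec_Suc[OF assms, of ?J] sum_Jc_svec[OF assms, of "Suc k" V] by simp
  ultimately show ?thesis
    unfolding pair_gain_def by (simp add: sum_Jc_svec[OF assms] sum.distrib sum_subtractf)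
qed

lemma pair_gain_nonneg:
  assumes "1 \<le> m" "is_chan V" "i \<le> Nnat m (Suc k - m)"
  shows "0 \<le> pair_gain m V k i"
  unfolding pair_gain_eq[OF assms(1,3)]
  using Jc_boxplus_boxminus(1)[OF is_chan_chanW[OF assms(2)] is_chan_chanW[OF assms(2)],
      of m "svec m (Suc k - m) i" m "svec m k i"]
  by simp

lemma pair_gain_eq_0_extremal:
  assumes "1 \<le> m" "is_chan V" "i \<le> Nnat m (Suc k - m)" "pair_gain m V k i = 0"
  shows "Jc (chanW m V (svec m k i)) \<in> {0, 1} \<or> Jc (chanW m V (svec m (Suc k - m) i)) \<in> {0, 1}"
  using assms(4) unfolding pair_gain_eq[OF assms(1,3)]
  using Jc_boxplus_boxminus(2)[OF is_chan_chanW[OF assms(2)] is_chan_chanW[OF assms(2)],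
      of m "svec m (Suc k - m) i" m "svec m k i"]
  by auto

lemma Sset_Suc_extremal_of_pair_gain_0:
  assumes "1 \<le> m" "is_chan V" "\<forall>i\<in>{1..Nnat m (Suc k - m)}. pair_gain m V k i = 0"
    and "s \<in> Sset m (Suc k)" "last s \<in> {Plus, Minus}"
  shows "Jc (chanW m V (take k s)) \<in> {0, 1} \<or> Jc (chanW m V (take (Suc k - m) s)) \<in> {0, 1}"
proof -
  obtain i where i: "i \<in> {1..Nnat m (Suc k - m)}" and s: "s = svec m k i @ [last s]"
    by (rule Sset_Suc_last_signed[OF assms(1,4)]) (use assms(5) in auto)
  have "take k s = svec m k i" "take (Suc k - m) s = svec m (Suc k - m) i"
    using i assms(1) by (subst s, simp add: take_svec)+
  then show ?thesis
    using pair_gain_eq_0_extremal[OF assms(1,2)] i assms(3) by simp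
qed

lemma convex_combination_gap:
  fixes p q a b c g :: real
  assumes "0 < p + q" "(p + q) * c = p * a + q * b + g"
  shows "c - (p / (p + q) * a + (1 - p / (p + q)) * b) = g / (p + q)"
proof -
  have "1 - p / (p + q) = q / (p + q)"
    using assms(1) by (simp add: field_simps)
  then have "p / (p + q) * a + (1 - p / (p + q)) * b = (p * a + q * b) / (p + q)"
    by (simp add: add_divide_distrib)
  moreover have "c = (p * a + q * b + g) / (p + q)"
    using assms by (simp add: field_simps)
  ultimately show ?thesis
    by (simp add: diff_divide_distrib[symmetric])
qed

theorem lemma1:
  fixes m n :: nat and Y :: "'y set" and W :: "'y \<Rightarrow> bool \<Rightarrow> real"
  assumes "m \<ge> 1" and "is_bdmc Y W" and "n \<ge> 1"
  defines "V \<equiv> base_chan Y W"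
  defines "\<mu> \<equiv> real (NN m (int n - 1)) / real (NN m (int n))"
  shows "EJ m V (int n) \<ge> \<mu> * EJ m V (int n - 1) + (1 - \<mu>) * EJ m V (int n - int m)
    \<and> (EJ m V (int n) = \<mu> * EJ m V (int n - 1) + (1 - \<mu>) * EJ m V (int n - int m) \<longrightarrow>
        (\<forall>s\<in>Sset m n. last s \<in> {Plus, Minus} \<longrightarrow>
            Jc (chanW m V (take (n - 1) s)) \<in> {0, 1} \<or> Jc (chanW m V (take (n - m) s)) \<in> {0, 1}))"
proof -
  obtain k where n: "n = Suc k"
    using assms(3) by (cases n) auto
  let ?N = "Nnat m k" and ?M = "Nnat m (Suc k - m)"
  let ?gain = "\<Sum>i\<in>{1..?M}. pair_gain m V k i"
  have V: "is_chan V"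
    unfolding V_def using assms(2) by (rule is_chan_base_chan)
  have EJ_diff: "EJ m V (int n - int m) = EJ m V (int (Suc k - m))"
    by (cases "n \<le> m") (auto simp: EJ_def n)
  have \<mu>: "\<mu> = real ?N / real (?N + ?M)"
    using NN_of_nat[of m "Suc k"] by (simp add: \<mu>_def n Nnat_Suc[OF assms(1)])
  have "real (?N + ?M) * EJ m V (int n)
      = real ?N * EJ m V (int n - 1) + real ?M * EJ m V (int n - int m) + ?gain"
    using EJ_Suc_eq_sum_pair_gain[OF assms(1), of k V] unfolding EJ_diff
    by (simp add: n Nnat_Suc[OF assms(1)])
  then have gap: "EJ m V (int n) - (\<mu> * EJ m V (int n - 1) + (1 - \<mu>) * EJ m V (int n - int m))
      = ?gain / real (?N + ?M)"
    unfolding \<mu> of_nat_add using Nnat_pos[of m k] by (intro convex_combination_gap) simp_all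
  have gain_nonneg: "\<forall>i\<in>{1..?M}. 0 \<le> pair_gain m V k i"
    using pair_gain_nonneg[OF assms(1) V] by simp
  then have "0 \<le> ?gain / real (?N + ?M)"
    by (intro divide_nonneg_nonneg sum_nonneg) auto
  show ?thesis
  proof (intro conjI impI ballI)
    show "\<mu> * EJ m V (int n - 1) + (1 - \<mu>) * EJ m V (int n - int m) \<le> EJ m V (int n)"
      using gap \<open>0 \<le> ?gain / real (?N + ?M)\<close> by linarith
    fix s
    assume "EJ m V (int n) = \<mu> * EJ m V (int n - 1) + (1 - \<mu>) * EJ m V (int n - int m)"
      and "s \<in> Sset m n" "last s \<in> {Plus, Minus}"
    moreover from this(1) gap gain_nonneg Nnat_pos[of m k]
    have "\<forall>i\<in>{1..?M}. pair_gain m V k i = 0"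
      using sum_nonneg_eq_0_iff[of "{1..?M}" "pair_gain m V k"] by simp
    ultimately show "Jc (chanW m V (take (n - 1) s)) \<in> {0, 1} \<or> Jc (chanW m V (take (n - m) s)) \<in> {0, 1}"
      using Sset_Suc_extremal_of_pair_gain_0[OF assms(1) V] by (simp add: n)
  qed
qed

end
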